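(* Let $\omega\in(0,\pi/2]$ and let $S$ be a moving sofa with rotation angle $\omega$ in standard position. Then the set $\mathcal{C}(S)=P_\omega\cap\bigcap_{0\le t\le\omega}Q_S^+(t)$ is a cap with rotation angle $\omega$.
   Context: For $t\in\mathbb{R}$ put $u_t=(\cos t,\sin t)$, $v_t=(-\sin t,\cos t)$; $R_t$ is counterclockwise rotation about the origin by $t$. For a nonempty compact $S$, $p_S(t)=\max_{p\in S}p\cdot u_t$; $H(t,h)=\{p:p\cdot u_t\le h\}$. The hallway is $L=L_H\cup L_V$, $L_H=(-\infty,1]\times[0,1]$, $L_V=[0,1]\times(-\infty,1]$. A moving sofa is a connected, nonempty, compact $S\subset\mathbb{R}^2$ such that some translate of $S$ lies in $L_H$ and can be moved by a continuous rigid motion inside $L$ to a subset of $L_V$; its rotation angle $\omega\in(0,\pi/2]$ is the total clockwise angle rotated (fixed data of the sofa). It is in standard position if $p_S(\omega)=p_S(\pi/2)=1$. Let $H=\mathbb{R}\times[0,1]$, $V=[0,1]\times\mathbb{R}$, $P_\omega=H\cap R_\omega(V)$, and $Q_S^+(t)=H(t,p_S(t))\cap H(t+\pi/2,p_S(t+\pi/2))$. With $J_\omega=[0,\omega]\cup[\pi/2,\pi/2+\omega]$, a cap with rotation angle $\omega$ is a nonempty compact convex set $K$ with $p_K(\omega)=p_K(\pi/2)=1$, $p_K(\pi+\omega)=p_K(3\pi/2)=0$, which is an intersection of closed half-planes $H(t,h)$ with $t\in J_\omega\cup\{\pi+\omega,3\pi/2\}$. *)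

theory Defs
  imports "HOL-Analysis.Analysis"
begin

type_synonym pt = "real \<times> real"

definition dotp :: "pt \<Rightarrow> pt \<Rightarrow> real" where
  "dotp p q = fst p * fst q + snd p * snd q"

definition u :: "real \<Rightarrow> pt" where
  "u t = (cos t, sin t)"

definition v :: "real \<Rightarrow> pt" where
  "v t = (- sin t, cos t)"

definition rot :: "real \<Rightarrow> pt \<Rightarrow> pt" where
  "rot t p = (cos t * fst p - sin t * snd p, sin t * fst p + cos t * snd p)"

text \<open>Support function p_S(t) = max over S of p . u_t (Sup = max for compact nonempty S).\<close>
definition supp :: "pt set \<Rightarrow> real \<Rightarrow> real" where
  "supp S t = Sup ((\<lambda>p. dotp p (u t)) ` S)"

definition halfplane :: "real \<Rightarrow> real \<Rightarrow> pt set" where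
  "halfplane t h = {p. dotp p (u t) \<le> h}"

definition LH :: "pt set" where
  "LH = {p. fst p \<le> 1 \<and> 0 \<le> snd p \<and> snd p \<le> 1}"

definition LV :: "pt set" where
  "LV = {p. 0 \<le> fst p \<and> fst p \<le> 1 \<and> snd p \<le> 1}"

definition hallway :: "pt set" where
  "hallway = LH \<union> LV"

text \<open>A moving sofa with rotation angle \<omega>: the rigid motion at time s is
  p \<mapsto> rot (- \<theta> s) p + x s (clockwise rotation by \<theta> s), continuous in s \<in> [0,1],
  starting with no rotation (a translate of S) inside LH, staying inside the hallway,
  ending inside LV, the total clockwise rotation being \<omega>.\<close>
definition moving_sofa :: "pt set \<Rightarrow> real \<Rightarrow> bool" where
  "moving_sofa S \<omega> \<longleftrightarrow>
     connected S \<and> S \<noteq> {} \<and> compact S \<and>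
     (\<exists>\<theta> :: real \<Rightarrow> real. \<exists>x :: real \<Rightarrow> pt.
        continuous_on {0..1} \<theta> \<and> continuous_on {0..1} x \<and>
        \<theta> 0 = 0 \<and> \<theta> 1 = \<omega> \<and>
        (\<lambda>p. rot (- \<theta> 0) p + x 0) ` S \<subseteq> LH \<and>
        (\<forall>s\<in>{0..1}. (\<lambda>p. rot (- \<theta> s) p + x s) ` S \<subseteq> hallway) \<and>
        (\<lambda>p. rot (- \<theta> 1) p + x 1) ` S \<subseteq> LV)"

definition standard_position :: "pt set \<Rightarrow> real \<Rightarrow> bool" where
  "standard_position S \<omega> \<longleftrightarrow> supp S \<omega> = 1 \<and> supp S (pi/2) = 1"

definition Hstrip :: "pt set" where
  "Hstrip = {p. 0 \<le> snd p \<and> snd p \<le> 1}"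

definition Vstrip :: "pt set" where
  "Vstrip = {p. 0 \<le> fst p \<and> fst p \<le> 1}"

definition P_set :: "real \<Rightarrow> pt set" where
  "P_set \<omega> = Hstrip \<inter> rot \<omega> ` Vstrip"

definition Qplus :: "pt set \<Rightarrow> real \<Rightarrow> pt set" where
  "Qplus S t = halfplane t (supp S t) \<inter> halfplane (t + pi/2) (supp S (t + pi/2))"

definition Jset :: "real \<Rightarrow> real set" where
  "Jset \<omega> = {0..\<omega>} \<union> {pi/2..pi/2 + \<omega>}"

definition is_cap :: "pt set \<Rightarrow> real \<Rightarrow> bool" where
  "is_cap K \<omega> \<longleftrightarrow>
     K \<noteq> {} \<and> compact K \<and> convex K \<and>
     supp K \<omega> = 1 \<and> supp K (pi/2) = 1 \<and>
     supp K (pi + \<omega>) = 0 \<and> supp K (3*pi/2) = 0 \<and>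
     (\<exists>F :: (real \<times> real) set.
        (\<forall>(t,h)\<in>F. t \<in> Jset \<omega> \<union> {pi + \<omega>, 3*pi/2}) \<and>
        K = (\<Inter>(t,h)\<in>F. halfplane t h))"

definition cap_of :: "pt set \<Rightarrow> real \<Rightarrow> pt set" where
  "cap_of S \<omega> = P_set \<omega> \<inter> (\<Inter>t\<in>{0..\<omega>}. Qplus S t)"

end

theory Submission
  imports Defs
begin

text \<open>The cap is an intersection of half-planes with admissible normals (those of \<open>P_set w\<close>
  and of the \<open>Qplus S t\<close>), hence closed and convex, and \<open>Hstrip\<close> together with the half-planes
  of normals \<open>u 0\<close> and \<open>u (w + pi/2)\<close> bounds it. In standard position \<open>S \<subseteq> P_set w\<close>, so
  \<open>S \<subseteq> cap_of S w\<close> and the support values 1 at \<open>w\<close> and \<open>pi/2\<close> are attained on \<open>S\<close>. The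
  support values 0 at \<open>pi + w\<close> and \<open>3*pi/2\<close> are attained by moving support points of \<open>S\<close> in
  directions \<open>- u \<alpha>\<close>, \<open>w \<le> \<alpha> \<le> pi/2\<close>, until they hit the opposite sides of \<open>P_set w\<close>.\<close>

lemma dotp_inner: "dotp p q = inner p q"
  by (cases p, cases q) (simp add: dotp_def inner_prod_def)

lemma dotp_u: "dotp p (u t) = fst p * cos t + snd p * sin t"
  by (simp add: dotp_def u_def)

lemma dotp_u_u: "dotp (u a) (u b) = cos (a - b)"
  by (simp add: dotp_def u_def cos_diff)

lemma dotp_diff_scaleR_left: "dotp (p - s *\<^sub>R q) r = dotp p r - s * dotp q r"
  by (simp add: dotp_inner inner_diff_left)

lemma dotp_u_pi_half: "dotp p (u (pi/2)) = snd p"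
  by (simp add: dotp_u)

lemma dotp_u_three_pi_half: "dotp p (u (3*pi/2)) = - snd p"
proof -
  have "cos (3*pi/2) = 0" "sin (3*pi/2) = -1"
    using cos_add[of "pi/2" pi] sin_add[of "pi/2" pi] by simp_all
  then show ?thesis by (simp add: dotp_u)
qed

lemma dotp_u_pi_plus: "dotp p (u (pi + t)) = - dotp p (u t)"
  by (simp add: dotp_u)

lemma fst_rot_neg: "fst (rot (- t) p) = dotp p (u t)"
  by (simp add: rot_def dotp_u)

lemma halfplane_eq: "halfplane t h = {p. inner (u t) p \<le> h}"
  by (simp add: halfplane_def dotp_inner inner_commute)

lemma closed_halfplane: "closed (halfplane t h)"
  unfolding halfplane_eq by (rule closed_halfspace_le)

lemma convex_halfplane: "convex (halfplane t h)"
  unfolding halfplane_eq by (rule convex_halfspace_le)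

lemma rot_image_Vstrip: "rot w ` Vstrip = {p. 0 \<le> dotp p (u w) \<and> dotp p (u w) \<le> 1}"
proof (intro set_eqI iffI)
  fix p assume "p \<in> rot w ` Vstrip"
  then obtain q where q: "q \<in> Vstrip" "p = rot w q" by auto
  have "dotp p (u w) = fst q"
    by (simp add: q(2) dotp_u rot_def algebra_simps flip: distrib_left)
  then show "p \<in> {p. 0 \<le> dotp p (u w) \<and> dotp p (u w) \<le> 1}"
    using q(1) by (simp add: Vstrip_def)
next
  fix p assume p: "p \<in> {p. 0 \<le> dotp p (u w) \<and> dotp p (u w) \<le> 1}"
  have "p = rot w (rot (-w) p)"
    by (cases p) (simp add: rot_def algebra_simps flip: distrib_left distrib_right)
  then show "p \<in> rot w ` Vstrip"
    using p by (auto simp: Vstrip_def fst_rot_neg)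
qed

lemma mem_P_set:
  "p \<in> P_set w \<longleftrightarrow> 0 \<le> snd p \<and> snd p \<le> 1 \<and> 0 \<le> dotp p (u w) \<and> dotp p (u w) \<le> 1"
  by (auto simp: P_set_def Hstrip_def rot_image_Vstrip)

lemma P_set_eq_halfplanes:
  "P_set w = halfplane (pi/2) 1 \<inter> halfplane (3*pi/2) 0 \<inter> halfplane w 1 \<inter> halfplane (pi + w) 0"
  by (auto simp: mem_P_set halfplane_def dotp_u_pi_half dotp_u_three_pi_half dotp_u_pi_plus)

lemma mem_Qplus:
  "p \<in> Qplus S t \<longleftrightarrow> dotp p (u t) \<le> supp S t \<and> dotp p (u (t + pi/2)) \<le> supp S (t + pi/2)"
  by (simp add: Qplus_def halfplane_def)

lemma mem_cap_of: "p \<in> cap_of S w \<longleftrightarrow> p \<in> P_set w \<and> (\<forall>t\<in>{0..w}. p \<in> Qplus S t)"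
  by (simp add: cap_of_def)

lemma supp_upper:
  assumes "compact S" "p \<in> S"
  shows "dotp p (u t) \<le> supp S t"
proof -
  have "continuous_on S (\<lambda>p. dotp p (u t))"
    unfolding dotp_u by (intro continuous_intros)
  then have "bounded ((\<lambda>p. dotp p (u t)) ` S)"
    using assms(1) by (intro compact_imp_bounded compact_continuous_image)
  then show ?thesis
    unfolding supp_def using assms(2) by (simp add: bounded_imp_bdd_above cSup_upper)
qed

lemma supp_attained:
  assumes "compact S" "S \<noteq> {}"
  obtains p where "p \<in> S" "dotp p (u t) = supp S t"
proof -
  have "continuous_on S (\<lambda>p. dotp p (u t))"
    unfolding dotp_u by (intro continuous_intros)
  then have "compact ((\<lambda>p. dotp p (u t)) ` S)"
    using assms(1) by (rule compact_continuous_image)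
  then have "supp S t \<in> (\<lambda>p. dotp p (u t)) ` S"
    unfolding supp_def using assms(2)
    by (meson closed_contains_Sup bounded_imp_bdd_above compact_imp_bounded
        compact_imp_closed image_is_empty)
  then show ?thesis using that by auto
qed

lemma supp_eqI:
  assumes "K \<subseteq> halfplane t c" "q \<in> K" "dotp q (u t) = c"
  shows "supp K t = c"
  unfolding supp_def using assms by (intro cSup_eq_maximum) (auto simp: halfplane_def)

lemma compact_subset_cap_of:
  assumes "compact S" "S \<subseteq> P_set w"
  shows "S \<subseteq> cap_of S w"
  using assms supp_upper[OF assms(1)] by (auto simp: mem_cap_of mem_Qplus)

lemma cap_of_halfplane_representation:
  assumes "0 \<le> w"
  shows "\<exists>F. (\<forall>(t, h)\<in>F. t \<in> Jset w \<union> {pi + w, 3*pi/2}) \<and>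
              cap_of S w = (\<Inter>(t, h)\<in>F. halfplane t h)"
proof (intro exI conjI)
  let ?F = "{(pi/2, 1), (3*pi/2, 0), (w, 1), (pi + w, 0)}
    \<union> (\<lambda>t. (t, supp S t)) ` {0..w} \<union> (\<lambda>t. (t + pi/2, supp S (t + pi/2))) ` {0..w}"
  show "\<forall>(t, h)\<in>?F. t \<in> Jset w \<union> {pi + w, 3*pi/2}"
    using assms by (auto simp: Jset_def)
  show "cap_of S w = (\<Inter>(t, h)\<in>?F. halfplane t h)"
    unfolding cap_of_def P_set_eq_halfplanes Qplus_def by auto
qed

lemma closed_cap_of: "0 \<le> w \<Longrightarrow> closed (cap_of S w)"
  using cap_of_halfplane_representation
  by (metis (no_types, lifting) case_prod_unfold closed_INT closed_halfplane)

lemma convex_cap_of: "0 \<le> w \<Longrightarrow> convex (cap_of S w)"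
  using cap_of_halfplane_representation
  by (metis (no_types, lifting) case_prod_unfold convex_INT convex_halfplane)

lemma bounded_cap_of:
  assumes "0 < w" "w \<le> pi/2"
  shows "bounded (cap_of S w)"
proof -
  define c where "c = supp S (w + pi/2)"
  have sin_w: "0 < sin w" and cos_w: "0 \<le> cos w"
    using assms by (auto intro!: sin_gt_zero cos_ge_zero)
  have "cap_of S w \<subseteq> {- c / sin w .. supp S 0} \<times> {0..1}"
  proof
    fix p assume "p \<in> cap_of S w"
    then have p: "0 \<le> snd p" "snd p \<le> 1" "dotp p (u 0) \<le> supp S 0" "dotp p (u (w + pi/2)) \<le> c"
      using assms(1) unfolding mem_cap_of mem_P_set mem_Qplus c_def by auto
    have "0 \<le> snd p * cos w"
      using p(1) cos_w by simp
    then have "- c \<le> fst p * sin w"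
      using p(4) by (simp add: dotp_u cos_add sin_add)
    then have "- c / sin w \<le> fst p"
      using sin_w by (simp add: field_simps)
    then show "p \<in> {- c / sin w .. supp S 0} \<times> {0..1}"
      using p by (cases p) (auto simp: dotp_u)
  qed
  then show ?thesis
    by (rule bounded_subset[OF bounded_Times[OF bounded_closed_interval bounded_closed_interval]])
qed

lemma compact_cap_of: "0 < w \<Longrightarrow> w \<le> pi/2 \<Longrightarrow> compact (cap_of S w)"
  by (simp add: compact_eq_bounded_closed bounded_cap_of closed_cap_of)

text \<open>At the start (end) of the motion a translate of \<open>S\<close> lies in a strip
  \<open>0 \<le> dotp p (u t) \<le> 1\<close> with \<open>t = pi/2\<close> (\<open>t = w\<close>), while \<open>supp S t = 1\<close>; so the
  translation has nonpositive component along \<open>u t\<close> and \<open>S\<close> itself lies in the strip.\<close>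
lemma standard_moving_sofa_subset_P_set:
  assumes "moving_sofa S w" "standard_position S w"
  shows "S \<subseteq> P_set w"
proof
  fix p assume "p \<in> S"
  have S: "compact S" "S \<noteq> {}"
    using assms(1) by (auto simp: moving_sofa_def)
  obtain \<theta> :: "real \<Rightarrow> real" and x :: "real \<Rightarrow> pt" where
    "\<theta> 0 = 0" "\<theta> 1 = w" and "(\<lambda>p. rot (- \<theta> 0) p + x 0) ` S \<subseteq> LH"
    and "(\<lambda>p. rot (- \<theta> 1) p + x 1) ` S \<subseteq> LV"
    using assms(1) unfolding moving_sofa_def by blast
  then have start: "(\<lambda>p. p + x 0) ` S \<subseteq> LH" and finish: "(\<lambda>p. rot (- w) p + x 1) ` S \<subseteq> LV"
    by (simp_all add: rot_def)
  have supp_w: "supp S w = 1" and supp_pi_half: "supp S (pi/2) = 1"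
    using assms(2) by (auto simp: standard_position_def)
  obtain a where a: "a \<in> S" "dotp a (u w) = 1"
    using supp_attained[OF S] supp_w by metis
  have "rot (- w) a + x 1 \<in> LV" "rot (- w) p + x 1 \<in> LV"
    using finish a(1) \<open>p \<in> S\<close> by auto
  then have lower_w: "0 \<le> dotp p (u w)"
    using a(2) by (simp add: LV_def fst_rot_neg)
  obtain b where b: "b \<in> S" "snd b = 1"
    using supp_attained[OF S] supp_pi_half by (metis dotp_u_pi_half)
  have "b + x 0 \<in> LH" "p + x 0 \<in> LH"
    using start b(1) \<open>p \<in> S\<close> by auto
  then have lower_pi_half: "0 \<le> snd p"
    using b(2) by (simp add: LH_def)
  have "dotp p (u w) \<le> 1" "snd p \<le> 1"
    using supp_upper[OF S(1) \<open>p \<in> S\<close>] supp_w supp_pi_half dotp_u_pi_half by metis+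
  with lower_w lower_pi_half show "p \<in> P_set w"
    by (simp add: mem_P_set)
qed

text \<open>Every direction \<open>- u \<alpha>\<close> with \<open>\<alpha> \<in> [w, pi/2]\<close> makes a non-acute angle with all the
  normals \<open>u t\<close>, \<open>u (t + pi/2)\<close>, \<open>t \<in> [0, w]\<close>, of the half-planes \<open>Qplus S t\<close>.\<close>
lemma cap_of_translate_inward:
  assumes "p \<in> cap_of S w" "0 \<le> s" "w \<le> \<alpha>" "\<alpha> \<le> pi/2" "p - s *\<^sub>R u \<alpha> \<in> P_set w"
  shows "p - s *\<^sub>R u \<alpha> \<in> cap_of S w"
  unfolding mem_cap_of
proof (intro conjI ballI assms(5))
  fix t assume t: "t \<in> {0..w}"
  then have "0 \<le> cos (\<alpha> - t)" "0 \<le> sin (\<alpha> - t)"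
    using assms(3,4) by (auto intro!: cos_ge_zero sin_ge_zero)
  moreover have "cos (\<alpha> - (t + pi/2)) = sin (\<alpha> - t)"
    by (simp add: cos_diff sin_diff cos_add sin_add)
  ultimately show "p - s *\<^sub>R u \<alpha> \<in> Qplus S t"
    using assms(1,2) t unfolding mem_cap_of mem_Qplus dotp_diff_scaleR_left dotp_u_u
    by (smt (verit) mult_nonneg_nonneg)
qed

lemma cap_of_subset_P_set: "cap_of S w \<subseteq> P_set w"
  by (auto simp: mem_cap_of)


lemma supp_cap_of_three_pi_half:
  assumes "0 < w" "w \<le> pi/2" "compact S" "S \<subseteq> P_set w" "a \<in> S" "dotp a (u w) = 1"
  shows "supp (cap_of S w) (3*pi/2) = 0"
proof (rule supp_eqI)
  define a' where "a' = a - snd a *\<^sub>R u (pi/2)"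
  have a: "0 \<le> snd a" "snd a \<le> 1"
    using assms(4,5) by (auto simp: mem_P_set)
  moreover have "0 \<le> sin w"
    using assms(1,2) by (simp add: sin_ge_zero)
  ultimately have "0 \<le> snd a * sin w" "snd a * sin w \<le> 1"
    by (simp_all add: mult_le_one)
  moreover have "dotp a' (u w) = 1 - snd a * sin w"
    using assms(6) by (simp add: a'_def dotp_diff_scaleR_left dotp_u_u cos_diff)
  moreover have a'_bottom: "snd a' = 0"
    by (simp add: a'_def u_def)
  ultimately have "a' \<in> P_set w"
    by (simp add: mem_P_set)
  then show "a' \<in> cap_of S w"
    unfolding a'_def using compact_subset_cap_of[OF assms(3,4)] assms(2,5) a(1)
    by (auto intro: cap_of_translate_inward)
  show "dotp a' (u (3*pi/2)) = 0"
    using a'_bottom by (simp add: dotp_u_three_pi_half)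
  show "cap_of S w \<subseteq> halfplane (3*pi/2) 0"
    using cap_of_subset_P_set by (auto simp: P_set_eq_halfplanes)
qed


lemma supp_cap_of_pi_plus:
  assumes "0 < w" "w \<le> pi/2" "compact S" "S \<subseteq> P_set w" "b \<in> S" "snd b = 1"
  shows "supp (cap_of S w) (pi + w) = 0"
proof (rule supp_eqI)
  define m where "m = dotp b (u w)"
  define b' where "b' = b - m *\<^sub>R u w"
  have m: "0 \<le> m" "m \<le> 1"
    using assms(4,5) by (auto simp: mem_P_set m_def)
  moreover have "0 \<le> sin w"
    using assms(1,2) by (simp add: sin_ge_zero)
  ultimately have "0 \<le> m * sin w" "m * sin w \<le> 1"
    by (simp_all add: mult_le_one)
  moreover have "snd b' = 1 - m * sin w"
    using assms(6) by (simp add: b'_def u_def)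
  moreover have b'_side: "dotp b' (u w) = 0"
    by (simp add: b'_def m_def dotp_diff_scaleR_left dotp_u_u)
  ultimately have "b' \<in> P_set w"
    by (simp add: mem_P_set)
  then show "b' \<in> cap_of S w"
    unfolding b'_def using compact_subset_cap_of[OF assms(3,4)] assms(2,5) m(1)
    by (auto intro: cap_of_translate_inward)
  show "dotp b' (u (pi + w)) = 0"
    using b'_side by (simp add: dotp_u_pi_plus)
  show "cap_of S w \<subseteq> halfplane (pi + w) 0"
    using cap_of_subset_P_set by (auto simp: P_set_eq_halfplanes)
qed

theorem theorem3p11:
  fixes S :: "(real \<times> real) set" and \<omega> :: real
  assumes "0 < \<omega>" and "\<omega> \<le> pi/2"
    and "moving_sofa S \<omega>"
    and "standard_position S \<omega>"
  shows "is_cap (cap_of S \<omega>) \<omega>"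
proof -
  have S: "compact S" "S \<noteq> {}"
    using assms(3) by (auto simp: moving_sofa_def)
  have SP: "S \<subseteq> P_set \<omega>"
    using standard_moving_sofa_subset_P_set[OF assms(3,4)] .
  have SK: "S \<subseteq> cap_of S \<omega>"
    using compact_subset_cap_of[OF S(1) SP] .
  have K_halfplanes: "cap_of S \<omega> \<subseteq> halfplane \<omega> 1" "cap_of S \<omega> \<subseteq> halfplane (pi/2) 1"
    using cap_of_subset_P_set by (auto simp: P_set_eq_halfplanes)
  obtain a where a: "a \<in> S" "dotp a (u \<omega>) = 1"
    using supp_attained[OF S] assms(4) by (metis standard_position_def)
  obtain b where b: "b \<in> S" "snd b = 1"
    using supp_attained[OF S] assms(4) by (metis standard_position_def dotp_u_pi_half)
  have "supp (cap_of S \<omega>) \<omega> = 1" "supp (cap_of S \<omega>) (pi/2) = 1"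
    using supp_eqI[OF K_halfplanes(1) _ a(2)] supp_eqI[OF K_halfplanes(2), of b] SK a(1) b
    by (auto simp: dotp_u_pi_half)
  moreover have "supp (cap_of S \<omega>) (3*pi/2) = 0" "supp (cap_of S \<omega>) (pi + \<omega>) = 0"
    using supp_cap_of_three_pi_half[OF assms(1,2) S(1) SP a]
      supp_cap_of_pi_plus[OF assms(1,2) S(1) SP b] .
  ultimately show ?thesis
    unfolding is_cap_def using assms(1,2) S(2) SK compact_cap_of convex_cap_of
      cap_of_halfplane_representation by auto
qed

end
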